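(* Let $\Gamma$ be a set of $\langle\cdot\rangle$-free formulas and $\phi$ a $\langle\cdot\rangle$-free formula. (1) If $\phi$ is derivable from $\Gamma$ in the Hilbert system $H_1$, then $\Gamma\vdash_{\mathbf{Ck}+\mathrm{cut}}\phi$. (2) If $\phi$ is derivable from $\Gamma$ in the Hilbert system $H_2$, then $\Gamma\vdash_{\mathbf{CK}}\phi$.
   Context: Formulas: built from propositional variables and the constant $\bot$ using $\lnot$, the binary connectives $\supset,\land,\lor$, and two binary conditional operators $[\phi]\psi$ and $\langle\phi\rangle\psi$ (treated as primitive by tableau rules). $\top$ abbreviates $\lnot\bot$; $\phi\equiv\psi$ abbreviates $(\phi\supset\psi)\land(\psi\supset\phi)$. "$\langle\cdot\rangle$-free" means not containing the operator $\langle\cdot\rangle$. Hilbert systems: the theorems of $H_1$ form the smallest set of $\langle\cdot\rangle$-free formulas containing all substitution instances of propositional tautologies and all instances of CM: $[\phi](\psi\land\theta)\supset([\phi]\psi\land[\phi]\theta)$, CC: $([\phi]\psi\land[\phi]\theta)\supset[\phi](\psi\land\theta)$, CN: $[\phi]\top$, and closed under modus ponens and RCEC (from $\psi\equiv\theta$ infer $[\phi]\psi\equiv[\phi]\theta$). $H_2$ is defined the same way but additionally closed under RCEA (from $\phi\equiv\psi$ infer $[\phi]\theta\equiv[\psi]\theta$). $\phi$ is derivable from $\Gamma$ in $H_n$ if there is a finite sequence ending in $\phi$ each member of which is in $\Gamma$, a theorem of $H_n$, or follows from earlier members by modus ponens. Tableaux: indices are positive integers. Prefixed formulas are expressions $i:\phi$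 and $i\,r_\phi\,j$. For a set $\Gamma$ of formulas and a formula $\phi$, a tableau for $(\Gamma,\phi)$ is a finite downward-branching tree labelled by prefixed formulas, each of which is either an assumption ($1:\psi$ with $\psi\in\Gamma$, or $1:\lnot\phi$) or obtained by applying a branch extension rule to prefixed formulas on its branch; applying a non-branching rule appends its conclusions to the branch, applying a branching rule splits the branch into one child branch per alternative, each alternative appending its listed conclusions. A branch is closed if it contains $i:\chi$ and $i:\lnot\chi$ for some $i,\chi$, or contains $i:\bot$; a tableau is closed if all branches are closed. $\Gamma\vdash_X\phi$ means there is a closed $X$-tableau for $(\Gamma,\phi)$. Basic ($\mathbf{Ck}$) rules: from $i:\phi\land\psi$ add $i:\phi,i:\psi$; from $i:\lnot(\phi\land\psi)$ branch into $i:\lnot\phi\mid i:\lnot\psi$; from $i:\phi\lor\psi$ branch into $i:\phi\mid i:\psi$; from $i:\lnot(\phi\lor\psi)$ add $i:\lnot\phi,i:\lnot\psi$; from $i:\phi\supset\psi$ branch into $i:\lnot\phi\mid i:\psi$; from $i:\lnot(\phi\supset\psi)$ add $i:\phi,i:\lnot\psi$; from $i:\lnot\lnot\phi$ add $i:\phi$; ($\Box$) from $i:[\phi]\psi$ and $i\,r_\phi\,j$ add $j:\psi$; ($\lnot\Box$) from $i:\lnot[\phi]\psi$ add $i\,r_\phi\,j$ and $j:\lnot\psi$ with $j$ new to the branch; ($\Diamond$) from $i:\langle\phi\rangle\psi$ add $i\,r_\phi\,j$ and $j:\psi$ with $j$ new; ($\lnot\Diamond$) from $i:\lnot\langle\phi\rangle\psi$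 and $i\,r_\phi\,j$ add $j:\lnot\psi$. (cut) for any index $i$ already on the branch and any formula $\phi$, branch into $i:\phi\mid i:\lnot\phi$. (ea) from $i\,r_\phi\,j$ and any formula $\psi$, branch into ($k:\lnot\phi$, $k:\psi$) $\mid$ ($k:\phi$, $k:\lnot\psi$) $\mid$ $i\,r_\psi\,j$, with $k$ new to the branch. $\mathbf{Ck}+\mathrm{cut}$ uses the basic rules and cut; $\mathbf{CK}$ uses the basic rules, cut and ea. *)

theory Defs
  imports Main
begin

datatype fm =
    Var nat
  | Bot
  | Neg fm
  | Imp fm fm
  | And fm fm
  | Or fm fm
  | Box fm fm   (* [phi] psi *)
  | Dia fm fm   (* <phi> psi *)

definition Top :: fm where "Top = Neg Bot"

definition Iff :: "fm \<Rightarrow> fm \<Rightarrow> fm" where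
  "Iff a b = And (Imp a b) (Imp b a)"

fun dfree :: "fm \<Rightarrow> bool" where
  "dfree (Var n) = True"
| "dfree Bot = True"
| "dfree (Neg a) = dfree a"
| "dfree (Imp a b) = (dfree a \<and> dfree b)"
| "dfree (And a b) = (dfree a \<and> dfree b)"
| "dfree (Or a b) = (dfree a \<and> dfree b)"
| "dfree (Box a b) = (dfree a \<and> dfree b)"
| "dfree (Dia a b) = False"

fun pure :: "fm \<Rightarrow> bool" where
  "pure (Var n) = True"
| "pure Bot = True"
| "pure (Neg a) = pure a"
| "pure (Imp a b) = (pure a \<and> pure b)"
| "pure (And a b) = (pure a \<and> pure b)"
| "pure (Or a b) = (pure a \<and> pure b)"
| "pure (Box a b) = False"
| "pure (Dia a b) = False"

fun peval :: "(nat \<Rightarrow> bool) \<Rightarrow> fm \<Rightarrow> bool" where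
  "peval v (Var n) = v n"
| "peval v Bot = False"
| "peval v (Neg a) = (\<not> peval v a)"
| "peval v (Imp a b) = (peval v a \<longrightarrow> peval v b)"
| "peval v (And a b) = (peval v a \<and> peval v b)"
| "peval v (Or a b) = (peval v a \<or> peval v b)"
| "peval v (Box a b) = False"
| "peval v (Dia a b) = False"

fun subst :: "(nat \<Rightarrow> fm) \<Rightarrow> fm \<Rightarrow> fm" where
  "subst s (Var n) = s n"
| "subst s Bot = Bot"
| "subst s (Neg a) = Neg (subst s a)"
| "subst s (Imp a b) = Imp (subst s a) (subst s b)"
| "subst s (And a b) = And (subst s a) (subst s b)"
| "subst s (Or a b) = Or (subst s a) (subst s b)"
| "subst s (Box a b) = Box (subst s a) (subst s b)"
| "subst s (Dia a b) = Dia (subst s a) (subst s b)"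

definition taut_inst :: "fm \<Rightarrow> bool" where
  "taut_inst f \<longleftrightarrow> (\<exists>p s. pure p \<and> (\<forall>v. peval v p) \<and> f = subst s p)"

inductive hthm :: "bool \<Rightarrow> fm \<Rightarrow> bool" for rcea :: bool where
  taut: "taut_inst f \<Longrightarrow> dfree f \<Longrightarrow> hthm rcea f"
| CM: "dfree a \<Longrightarrow> dfree b \<Longrightarrow> dfree c \<Longrightarrow>
        hthm rcea (Imp (Box a (And b c)) (And (Box a b) (Box a c)))"
| CC: "dfree a \<Longrightarrow> dfree b \<Longrightarrow> dfree c \<Longrightarrow>
        hthm rcea (Imp (And (Box a b) (Box a c)) (Box a (And b c)))"
| CN: "dfree a \<Longrightarrow> hthm rcea (Box a Top)"
| MP: "hthm rcea (Imp a b) \<Longrightarrow> hthm rcea a \<Longrightarrow> hthm rcea b"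
| RCEC: "hthm rcea (Iff b c) \<Longrightarrow> dfree a \<Longrightarrow> hthm rcea (Iff (Box a b) (Box a c))"
| RCEA: "rcea \<Longrightarrow> hthm rcea (Iff a b) \<Longrightarrow> dfree c \<Longrightarrow> hthm rcea (Iff (Box a c) (Box b c))"

text \<open>derivability from a set of premises (finite sequences = inductive closure)\<close>
inductive hderiv :: "bool \<Rightarrow> fm set \<Rightarrow> fm \<Rightarrow> bool" for rcea :: bool and \<Gamma> :: "fm set" where
  prem: "f \<in> \<Gamma> \<Longrightarrow> hderiv rcea \<Gamma> f"
| hthm_in: "hthm rcea f \<Longrightarrow> hderiv rcea \<Gamma> f"
| mp: "hderiv rcea \<Gamma> (Imp a b) \<Longrightarrow> hderiv rcea \<Gamma> a \<Longrightarrow> hderiv rcea \<Gamma> b"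

abbreviation "H1_derivable \<equiv> hderiv False"
abbreviation "H2_derivable \<equiv> hderiv True"

text \<open>Prefixed formulas: PF i phi is i:phi, Rel i phi j is i r_phi j. Indices are positive nats.\<close>
datatype pf = PF nat fm | Rel nat fm nat

fun pf_idx :: "pf \<Rightarrow> nat set" where
  "pf_idx (PF i f) = {i}"
| "pf_idx (Rel i f j) = {i, j}"

definition idx :: "pf list \<Rightarrow> nat set" where
  "idx B = (\<Union>x\<in>set B. pf_idx x)"

definition branch_closed :: "pf list \<Rightarrow> bool" where
  "branch_closed B \<longleftrightarrow> (\<exists>i f. PF i f \<in> set B \<and> PF i (Neg f) \<in> set B) \<or> (\<exists>i. PF i Bot \<in> set B)"

text \<open>A rule instance applicable to branch B: the list of alternatives, each a list of
  conclusions appended to the branch (one alternative = non-branching rule).\<close>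
inductive basic_rule :: "pf list \<Rightarrow> pf list list \<Rightarrow> bool" where
  andR: "PF i (And a b) \<in> set B \<Longrightarrow> basic_rule B [[PF i a, PF i b]]"
| nandR: "PF i (Neg (And a b)) \<in> set B \<Longrightarrow> basic_rule B [[PF i (Neg a)], [PF i (Neg b)]]"
| orR: "PF i (Or a b) \<in> set B \<Longrightarrow> basic_rule B [[PF i a], [PF i b]]"
| norR: "PF i (Neg (Or a b)) \<in> set B \<Longrightarrow> basic_rule B [[PF i (Neg a), PF i (Neg b)]]"
| impR: "PF i (Imp a b) \<in> set B \<Longrightarrow> basic_rule B [[PF i (Neg a)], [PF i b]]"
| nimpR: "PF i (Neg (Imp a b)) \<in> set B \<Longrightarrow> basic_rule B [[PF i a, PF i (Neg b)]]"
| nnegR: "PF i (Neg (Neg a)) \<in> set B \<Longrightarrow> basic_rule B [[PF i a]]"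
| boxR: "PF i (Box a b) \<in> set B \<Longrightarrow> Rel i a j \<in> set B \<Longrightarrow> basic_rule B [[PF j b]]"
| nboxR: "PF i (Neg (Box a b)) \<in> set B \<Longrightarrow> 0 < j \<Longrightarrow> j \<notin> idx B \<Longrightarrow>
           basic_rule B [[Rel i a j, PF j (Neg b)]]"
| diaR: "PF i (Dia a b) \<in> set B \<Longrightarrow> 0 < j \<Longrightarrow> j \<notin> idx B \<Longrightarrow>
           basic_rule B [[Rel i a j, PF j b]]"
| ndiaR: "PF i (Neg (Dia a b)) \<in> set B \<Longrightarrow> Rel i a j \<in> set B \<Longrightarrow> basic_rule B [[PF j (Neg b)]]"

inductive cut_rule :: "pf list \<Rightarrow> pf list list \<Rightarrow> bool" where
  "i \<in> idx B \<Longrightarrow> cut_rule B [[PF i f], [PF i (Neg f)]]"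

inductive ea_rule :: "pf list \<Rightarrow> pf list list \<Rightarrow> bool" where
  "Rel i a j \<in> set B \<Longrightarrow> 0 < k \<Longrightarrow> k \<notin> idx B \<Longrightarrow>
     ea_rule B [[PF k (Neg a), PF k b], [PF k a, PF k (Neg b)], [Rel i b j]]"

definition Ck_cut :: "pf list \<Rightarrow> pf list list \<Rightarrow> bool" where
  "Ck_cut B alts \<longleftrightarrow> basic_rule B alts \<or> cut_rule B alts"

definition CK :: "pf list \<Rightarrow> pf list list \<Rightarrow> bool" where
  "CK B alts \<longleftrightarrow> basic_rule B alts \<or> cut_rule B alts \<or> ea_rule B alts"

text \<open>closes R Gamma phi B: the branch B (listed bottom-up) can be extended to a finite
  closed subtree using the rules R and the assumptions for (Gamma, phi).
  A closed R-tableau for (Gamma, phi) exists iff the empty branch closes.\<close>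
inductive closes :: "(pf list \<Rightarrow> pf list list \<Rightarrow> bool) \<Rightarrow> fm set \<Rightarrow> fm \<Rightarrow> pf list \<Rightarrow> bool"
  for R \<Gamma> \<phi> where
  closed: "branch_closed B \<Longrightarrow> closes R \<Gamma> \<phi> B"
| assm_prem: "\<psi> \<in> \<Gamma> \<Longrightarrow> closes R \<Gamma> \<phi> (PF 1 \<psi> # B) \<Longrightarrow> closes R \<Gamma> \<phi> B"
| assm_neg: "closes R \<Gamma> \<phi> (PF 1 (Neg \<phi>) # B) \<Longrightarrow> closes R \<Gamma> \<phi> B"
| step: "R B alts \<Longrightarrow> (\<forall>a\<in>set alts. closes R \<Gamma> \<phi> (rev a @ B)) \<Longrightarrow> closes R \<Gamma> \<phi> B"

definition tab_derivable :: "(pf list \<Rightarrow> pf list list \<Rightarrow> bool) \<Rightarrow> fm set \<Rightarrow> fm \<Rightarrow> bool" where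
  "tab_derivable R \<Gamma> \<phi> \<longleftrightarrow> closes R \<Gamma> \<phi> []"

end

theory Submission
  imports Defs
begin

text \<open>The negation of each Hilbert theorem closes at every prefix of every branch, by
  induction on derivations. For a tautology, cutting at the prefix on the substituted atoms
  fixes a valuation on each branch, against which the formula then decomposes. Modus ponens
  is a cut on the implication. CC and CN have direct tableaux, while CM and RCEC reduce
  propositionally to monotonicity \<open>b \<supset> c / [a]b \<supset> [a]c\<close>, whose tableau uses \<open>b \<supset> c\<close> at the
  fresh successor. For RCEA, ea replaces the edge \<open>i r\<^sub>b j\<close> by \<open>i r\<^sub>a j\<close>, and its side
  branches are closed by \<open>a \<equiv> b\<close> at their fresh prefix. Premises from \<open>\<Gamma>\<close> are needed only
  at prefix 1, as a derivation never uses them under a box.\<close>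

lemma finite_idx: "finite (idx B)"
proof -
  have "finite (pf_idx x)" for x by (cases x) auto
  then show ?thesis unfolding idx_def by auto
qed

lemma fresh_index: obtains j where "0 < j" "j \<notin> idx B"
proof
  let ?j = "Suc (Max (insert 0 (idx B)))"
  show "0 < ?j" by simp
  have "?j \<le> Max (insert 0 (idx B))" if "?j \<in> idx B"
    using that finite_idx by (intro Max_ge) auto
  then show "?j \<notin> idx B" by auto
qed

lemma index_in_idx: "PF i f \<in> set B \<Longrightarrow> i \<in> idx B"
  unfolding idx_def by force

definition signed :: "bool \<Rightarrow> nat \<Rightarrow> fm \<Rightarrow> pf" where
  "signed b i f = (if b then PF i f else PF i (Neg f))"

lemma signed_simps [simp]:
  "signed True i f = PF i f"
  "signed False i f = PF i (Neg f)"
  by (simp_all add: signed_def)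

fun atoms :: "fm \<Rightarrow> nat set" where
  "atoms (Var n) = {n}"
| "atoms Bot = {}"
| "atoms (Neg a) = atoms a"
| "atoms (Imp a b) = atoms a \<union> atoms b"
| "atoms (And a b) = atoms a \<union> atoms b"
| "atoms (Or a b) = atoms a \<union> atoms b"
| "atoms (Box a b) = {}"
| "atoms (Dia a b) = {}"

lemma finite_atoms: "finite (atoms f)"
  by (induction f) auto

locale cut_tableau =
  fixes R :: "pf list \<Rightarrow> pf list list \<Rightarrow> bool" and \<Gamma> :: "fm set" and \<phi> :: fm
  assumes basic_rule_le: "basic_rule \<le> R" and cut_rule_le: "cut_rule \<le> R"
begin

abbreviation closable :: "pf list \<Rightarrow> bool" where
  "closable \<equiv> closes R \<Gamma> \<phi>"

lemma closable_contra: "PF i f \<in> set B \<Longrightarrow> PF i (Neg f) \<in> set B \<Longrightarrow> closable B"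
  by (rule closes.closed) (auto simp: branch_closed_def)

lemma closable_bot: "PF i Bot \<in> set B \<Longrightarrow> closable B"
  by (rule closes.closed) (auto simp: branch_closed_def)

lemma closable_basic:
  "basic_rule B alts \<Longrightarrow> (\<And>a. a \<in> set alts \<Longrightarrow> closable (rev a @ B)) \<Longrightarrow> closable B"
  using basic_rule_le by (auto intro: closes.step)

lemma closable_and:
  "PF i (And a b) \<in> set B \<Longrightarrow> closable (PF i b # PF i a # B) \<Longrightarrow> closable B"
  by (rule closable_basic[OF basic_rule.andR]) auto

lemma closable_not_and:
  "PF i (Neg (And a b)) \<in> set B \<Longrightarrow> closable (PF i (Neg a) # B) \<Longrightarrow> closable (PF i (Neg b) # B)
    \<Longrightarrow> closable B"
  by (rule closable_basic[OF basic_rule.nandR]) auto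

lemma closable_or:
  "PF i (Or a b) \<in> set B \<Longrightarrow> closable (PF i a # B) \<Longrightarrow> closable (PF i b # B) \<Longrightarrow> closable B"
  by (rule closable_basic[OF basic_rule.orR]) auto

lemma closable_not_or:
  "PF i (Neg (Or a b)) \<in> set B \<Longrightarrow> closable (PF i (Neg b) # PF i (Neg a) # B) \<Longrightarrow> closable B"
  by (rule closable_basic[OF basic_rule.norR]) auto

lemma closable_imp:
  "PF i (Imp a b) \<in> set B \<Longrightarrow> closable (PF i (Neg a) # B) \<Longrightarrow> closable (PF i b # B)
    \<Longrightarrow> closable B"
  by (rule closable_basic[OF basic_rule.impR]) auto

lemma closable_not_imp:
  "PF i (Neg (Imp a b)) \<in> set B \<Longrightarrow> closable (PF i (Neg b) # PF i a # B) \<Longrightarrow> closable B"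
  by (rule closable_basic[OF basic_rule.nimpR]) auto

lemma closable_not_not:
  "PF i (Neg (Neg a)) \<in> set B \<Longrightarrow> closable (PF i a # B) \<Longrightarrow> closable B"
  by (rule closable_basic[OF basic_rule.nnegR]) auto

lemma closable_box:
  "PF i (Box a b) \<in> set B \<Longrightarrow> Rel i a j \<in> set B \<Longrightarrow> closable (PF j b # B) \<Longrightarrow> closable B"
  by (rule closable_basic[OF basic_rule.boxR]) auto

lemma closable_not_box:
  assumes "PF i (Neg (Box a b)) \<in> set B"
    and "\<And>j. j \<notin> idx B \<Longrightarrow> closable (PF j (Neg b) # Rel i a j # B)"
  shows "closable B"
proof -
  obtain j where j: "0 < j" "j \<notin> idx B" by (rule fresh_index)
  show ?thesis
    by (rule closable_basic[OF basic_rule.nboxR[OF assms(1) j]]) (use assms(2) j in auto)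
qed

lemma closable_cut:
  assumes "i \<in> idx B" and "closable (PF i f # B)" and "closable (PF i (Neg f) # B)"
  shows "closable B"
proof (rule closes.step)
  show "R B [[PF i f], [PF i (Neg f)]]"
    using cut_rule.intros[OF assms(1)] cut_rule_le by auto
qed (use assms in auto)

lemma closable_ea:
  assumes "ea_rule \<le> R" and "Rel i a j \<in> set B"
    and "\<And>k. k \<notin> idx B \<Longrightarrow> closable (PF k b # PF k (Neg a) # B)"
    and "\<And>k. k \<notin> idx B \<Longrightarrow> closable (PF k (Neg b) # PF k a # B)"
    and "closable (Rel i b j # B)"
  shows "closable B"
proof -
  obtain k where k: "0 < k" "k \<notin> idx B" by (rule fresh_index)
  show ?thesis
  proof (rule closes.step)
    show "R B [[PF k (Neg a), PF k b], [PF k a, PF k (Neg b)], [Rel i b j]]"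
      using ea_rule.intros[OF assms(2) k] assms(1) by auto
  qed (use assms k in auto)
qed

lemma closable_signed_peval:
  assumes "pure q" and "\<forall>n\<in>atoms q. signed (v n) i (s n) \<in> set B"
    and "signed (\<not> peval v q) i (subst s q) \<in> set B"
  shows "closable B"
  using assms
proof (induction q arbitrary: B)
  case (Var n)
  then show ?case by (cases "v n") (auto intro: closable_contra[of i "s n"])
next
  case Bot
  then show ?case by (auto intro: closable_bot[of i])
next
  case (Neg a)
  then show ?case by (cases "peval v a") (auto intro: closable_not_not[of i "subst s a"])
next
  case (Imp a b)
  then show ?case
    by (cases "peval v a"; cases "peval v b")
      (auto intro: closable_imp[of i "subst s a" "subst s b"]
        closable_not_imp[of i "subst s a" "subst s b"])
next
  case (And a b)
  then show ?case
    by (cases "peval v a"; cases "peval v b")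
      (auto intro: closable_and[of i "subst s a" "subst s b"]
        closable_not_and[of i "subst s a" "subst s b"])
next
  case (Or a b)
  then show ?case
    by (cases "peval v a"; cases "peval v b")
      (auto intro: closable_or[of i "subst s a" "subst s b"]
        closable_not_or[of i "subst s a" "subst s b"])
qed auto

lemma closable_taut_by_cuts:
  assumes "pure p" and "\<forall>v. peval v p" and "PF i (Neg (subst s p)) \<in> set B"
    and "finite N" and "\<forall>n\<in>atoms p - N. signed (v n) i (s n) \<in> set B"
  shows "closable B"
  using assms(4,5,3)
proof (induction N arbitrary: B v rule: finite_induct)
  case empty
  show ?case
    by (rule closable_signed_peval[of p v i s]) (use assms(1,2) empty in auto)
next
  case (insert n N)
  show ?case
  proof (rule closable_cut)
    show "i \<in> idx B" using insert.prems(2) by (rule index_in_idx)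
    show "closable (PF i (s n) # B)"
      by (rule insert.IH[of "v(n := True)"]) (use insert.prems in auto)
    show "closable (PF i (Neg (s n)) # B)"
      by (rule insert.IH[of "v(n := False)"]) (use insert.prems in auto)
  qed
qed

definition proves_at :: "nat \<Rightarrow> fm \<Rightarrow> bool" where
  "proves_at i f \<longleftrightarrow> (\<forall>B. closable (PF i (Neg f) # B))"

definition tab_valid :: "fm \<Rightarrow> bool" where
  "tab_valid f \<longleftrightarrow> (\<forall>i. proves_at i f)"

lemma tab_valid_subst_taut:
  assumes "pure p" and "\<forall>v. peval v p"
  shows "tab_valid (subst s p)"
  unfolding tab_valid_def proves_at_def
proof (intro allI)
  fix i B
  show "closable (PF i (Neg (subst s p)) # B)"
    using closable_taut_by_cuts[OF assms, of i s _ "atoms p"] by (simp add: finite_atoms)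
qed

lemma tab_valid_taut_inst: "taut_inst f \<Longrightarrow> tab_valid f"
  unfolding taut_inst_def using tab_valid_subst_taut by blast

lemma closable_proves_at_imp:
  assumes "proves_at j (Imp b c)" and "PF j b \<in> set B" and "PF j (Neg c) \<in> set B"
  shows "closable B"
proof (rule closable_cut)
  show "j \<in> idx B" using assms(2) by (rule index_in_idx)
  show "closable (PF j (Imp b c) # B)"
    by (rule closable_imp[of j b c])
      (use assms(2,3) in \<open>auto intro: closable_contra[of j b] closable_contra[of j c]\<close>)
  show "closable (PF j (Neg (Imp b c)) # B)"
    using assms(1) by (simp add: proves_at_def)
qed

lemma proves_at_mp:
  assumes "proves_at i (Imp a b)" and "proves_at i a"
  shows "proves_at i b"
  unfolding proves_at_def
proof
  fix B
  show "closable (PF i (Neg b) # B)"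
  proof (rule closable_cut)
    show "i \<in> idx (PF i (Neg b) # B)" by (simp add: idx_def)
    show "closable (PF i a # PF i (Neg b) # B)"
      using assms(1) by (rule closable_proves_at_imp) auto
    show "closable (PF i (Neg a) # PF i (Neg b) # B)"
      using assms(2) by (simp add: proves_at_def)
  qed
qed

lemma tab_valid_mp: "tab_valid (Imp a b) \<Longrightarrow> tab_valid a \<Longrightarrow> tab_valid b"
  unfolding tab_valid_def using proves_at_mp by blast

lemma tab_valid_iffD:
  assumes "tab_valid (Iff a b)"
  shows "tab_valid (Imp a b)" and "tab_valid (Imp b a)"
proof -
  have "tab_valid (Imp (Iff a b) (Imp a b))" "tab_valid (Imp (Iff a b) (Imp b a))"
    using tab_valid_subst_taut[of "Imp (Iff (Var 0) (Var 1)) (Imp (Var 0) (Var 1))" "nth [a, b]"]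
      tab_valid_subst_taut[of "Imp (Iff (Var 0) (Var 1)) (Imp (Var 1) (Var 0))" "nth [a, b]"]
    by (simp_all add: Iff_def)
  with assms show "tab_valid (Imp a b)" and "tab_valid (Imp b a)"
    by (blast intro: tab_valid_mp)+
qed

lemma tab_valid_iffI:
  assumes "tab_valid (Imp a b)" and "tab_valid (Imp b a)"
  shows "tab_valid (Iff a b)"
proof -
  have "tab_valid (Imp (Imp a b) (Imp (Imp b a) (Iff a b)))"
    using tab_valid_subst_taut[of
        "Imp (Imp (Var 0) (Var 1)) (Imp (Imp (Var 1) (Var 0)) (Iff (Var 0) (Var 1)))" "nth [a, b]"]
    by (simp add: Iff_def)
  with assms show ?thesis by (blast intro: tab_valid_mp)
qed

lemma tab_valid_imp_conj:
  assumes "tab_valid (Imp a b)" and "tab_valid (Imp a c)"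
  shows "tab_valid (Imp a (And b c))"
proof -
  have "tab_valid (Imp (Imp a b) (Imp (Imp a c) (Imp a (And b c))))"
    using tab_valid_subst_taut[of
        "Imp (Imp (Var 0) (Var 1)) (Imp (Imp (Var 0) (Var 2)) (Imp (Var 0) (And (Var 1) (Var 2))))"
        "nth [a, b, c]"]
    by simp
  with assms show ?thesis by (blast intro: tab_valid_mp)
qed

lemma tab_valid_box_mono:
  assumes "tab_valid (Imp b c)"
  shows "tab_valid (Imp (Box a b) (Box a c))"
  unfolding tab_valid_def proves_at_def
proof (intro allI)
  fix i B
  have bc: "proves_at j (Imp b c)" for j
    using assms by (simp add: tab_valid_def)
  let ?root = "PF i (Neg (Imp (Box a b) (Box a c))) # B"
  let ?B = "PF i (Neg (Box a c)) # PF i (Box a b) # ?root"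
  have "closable ?B"
  proof (rule closable_not_box[of i a c])
    fix j
    have "closable (PF j b # PF j (Neg c) # Rel i a j # ?B)"
      using bc[of j] by (rule closable_proves_at_imp) auto
    then show "closable (PF j (Neg c) # Rel i a j # ?B)"
      by (rule closable_box[of i a b, rotated 2]) auto
  qed auto
  then show "closable ?root" by (rule closable_not_imp[rotated]) auto
qed

lemma tab_valid_CC: "tab_valid (Imp (And (Box a b) (Box a c)) (Box a (And b c)))"
  unfolding tab_valid_def proves_at_def
proof (intro allI)
  fix i B
  let ?root = "PF i (Neg (Imp (And (Box a b) (Box a c)) (Box a (And b c)))) # B"
  let ?B = "PF i (Box a c) # PF i (Box a b) #
    PF i (Neg (Box a (And b c))) # PF i (And (Box a b) (Box a c)) # ?root"
  have "closable ?B"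
  proof (rule closable_not_box[of i a "And b c"])
    fix j
    let ?Bj = "PF j (Neg (And b c)) # Rel i a j # ?B"
    have "closable (PF j c # PF j b # ?Bj)"
      by (rule closable_not_and[of j b c])
        (auto intro: closable_contra[of j b] closable_contra[of j c])
    then have "closable (PF j b # ?Bj)" by (rule closable_box[of i a c, rotated 2]) auto
    then show "closable ?Bj" by (rule closable_box[of i a b, rotated 2]) auto
  qed auto
  then have "closable (PF i (Neg (Box a (And b c))) # PF i (And (Box a b) (Box a c)) # ?root)"
    by (rule closable_and[rotated]) auto
  then show "closable ?root" by (rule closable_not_imp[rotated]) auto
qed

lemma tab_valid_CN: "tab_valid (Box a Top)"
  unfolding tab_valid_def proves_at_def
proof (intro allI)
  fix i B
  let ?root = "PF i (Neg (Box a Top)) # B"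
  show "closable ?root"
  proof (rule closable_not_box[of i a Top])
    fix j
    have "closable (PF j Bot # PF j (Neg Top) # Rel i a j # ?root)"
      by (rule closable_bot[of j]) simp
    then show "closable (PF j (Neg Top) # Rel i a j # ?root)"
      unfolding Top_def by (rule closable_not_not[rotated]) auto
  qed auto
qed

lemma tab_valid_CM: "tab_valid (Imp (Box a (And b c)) (And (Box a b) (Box a c)))"
proof -
  have "tab_valid (Imp (And b c) b)" and "tab_valid (Imp (And b c) c)"
    using tab_valid_subst_taut[of "Imp (And (Var 0) (Var 1)) (Var 0)" "nth [b, c]"]
      tab_valid_subst_taut[of "Imp (And (Var 0) (Var 1)) (Var 1)" "nth [b, c]"]
    by simp_all
  then show ?thesis by (blast intro: tab_valid_imp_conj tab_valid_box_mono)
qed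

lemma tab_valid_RCEC: "tab_valid (Iff b c) \<Longrightarrow> tab_valid (Iff (Box a b) (Box a c))"
  by (blast intro: tab_valid_iffI tab_valid_box_mono dest: tab_valid_iffD)

lemma tab_valid_box_antecedent:
  assumes "ea_rule \<le> R" and "tab_valid (Iff a b)"
  shows "tab_valid (Imp (Box a c) (Box b c))"
  unfolding tab_valid_def proves_at_def
proof (intro allI)
  fix i B
  have ab: "proves_at k (Imp a b)" and ba: "proves_at k (Imp b a)" for k
    using tab_valid_iffD[OF assms(2)] by (simp_all add: tab_valid_def)
  let ?root = "PF i (Neg (Imp (Box a c) (Box b c))) # B"
  let ?B = "PF i (Neg (Box b c)) # PF i (Box a c) # ?root"
  have "closable ?B"
  proof (rule closable_not_box[of i b c])
    fix j
    let ?Bj = "PF j (Neg c) # Rel i b j # ?B"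
    show "closable ?Bj"
    proof (rule closable_ea[OF assms(1), of i b j _ a])
      fix k
      show "closable (PF k a # PF k (Neg b) # ?Bj)"
        using ab[of k] by (rule closable_proves_at_imp) auto
      show "closable (PF k (Neg a) # PF k b # ?Bj)"
        using ba[of k] by (rule closable_proves_at_imp) auto
      show "closable (Rel i a j # ?Bj)"
        by (rule closable_box[of i a c _ j]) (auto intro: closable_contra[of j c])
    qed auto
  qed auto
  then show "closable ?root" by (rule closable_not_imp[rotated]) auto
qed

lemma tab_valid_RCEA:
  assumes "ea_rule \<le> R" and "tab_valid (Iff a b)"
  shows "tab_valid (Iff (Box a c) (Box b c))"
proof -
  have "tab_valid (Iff b a)"
    using tab_valid_iffD[OF assms(2)] by (rule tab_valid_iffI[rotated])
  then show ?thesis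
    using assms by (blast intro: tab_valid_iffI tab_valid_box_antecedent)
qed

lemma hthm_tab_valid:
  assumes "rcea \<Longrightarrow> ea_rule \<le> R" and "hthm rcea f"
  shows "tab_valid f"
  using assms(2)
proof induction
  case (taut f)
  from taut(1) show ?case by (rule tab_valid_taut_inst)
next
  case (MP a b)
  from MP.IH show ?case by (rule tab_valid_mp)
next
  case (RCEC b c a)
  from RCEC.IH show ?case by (rule tab_valid_RCEC)
next
  case (RCEA a b c)
  from assms(1)[OF RCEA(1)] RCEA.IH show ?case by (rule tab_valid_RCEA)
qed (rule tab_valid_CM tab_valid_CC tab_valid_CN)+

lemma hderiv_proves_at_one:
  assumes "rcea \<Longrightarrow> ea_rule \<le> R" and "hderiv rcea \<Gamma> f"
  shows "proves_at 1 f"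
  using assms(2)
proof induction
  case (prem f)
  show ?case
    unfolding proves_at_def
    by (rule allI, rule closes.assm_prem[OF prem]) (rule closable_contra[of 1 f]; simp)
next
  case (hthm_in f)
  then show ?case using hthm_tab_valid[OF assms(1)] by (simp add: tab_valid_def)
next
  case (mp a b)
  from mp.IH show ?case by (rule proves_at_mp)
qed

lemma hderiv_tab_derivable:
  assumes "rcea \<Longrightarrow> ea_rule \<le> R" and "hderiv rcea \<Gamma> \<phi>"
  shows "tab_derivable R \<Gamma> \<phi>"
  unfolding tab_derivable_def
  by (rule closes.assm_neg) (use hderiv_proves_at_one[OF assms] in \<open>simp add: proves_at_def\<close>)

end

theorem mainTheorem5:
  fixes \<Gamma> :: "fm set" and \<phi> :: fm
  assumes "\<forall>\<psi>\<in>\<Gamma>. dfree \<psi>" and "dfree \<phi>"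
  shows "(H1_derivable \<Gamma> \<phi> \<longrightarrow> tab_derivable Ck_cut \<Gamma> \<phi>)
       \<and> (H2_derivable \<Gamma> \<phi> \<longrightarrow> tab_derivable CK \<Gamma> \<phi>)"
proof -
  interpret Ck: cut_tableau Ck_cut \<Gamma> \<phi>
    by unfold_locales (auto simp: Ck_cut_def)
  interpret CK: cut_tableau CK \<Gamma> \<phi>
    by unfold_locales (auto simp: CK_def)
  have "ea_rule \<le> CK" by (auto simp: CK_def)
  then show ?thesis
    using Ck.hderiv_tab_derivable[of False] CK.hderiv_tab_derivable[of True] by blast
qed

end
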